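(* For $N\ge2$ let $x_{N,k}=k/N$ and $\lambda_{N,k}=\frac{1}{2(N-1)}$ for $k=1,\dots,N-1$, and $x_{N,N}=2$, $\lambda_{N,N}=\frac12$. Let $V_{N,1},\dots,V_{N,N}$ solve the deterministic system $$\frac{d}{dt}V_{N,k}(t)=\sum_{j\neq k}\frac{2(\lambda_{N,k}+\lambda_{N,j})}{V_{N,k}(t)-V_{N,j}(t)},\qquad V_{N,k}(0)=x_{N,k},$$ and let $\alpha_{N,t}=\sum_{k=1}^N\lambda_{N,k}\delta_{V_{N,k}(t)}$. Then for every $T>0$ the sequence $\{\alpha_{N,\cdot}\}_N$ is not tight in $\mathcal M(T)$.
   Context: $\mathcal M(T)=C([0,T],\mathcal P(\mathbb R))$ with the topology of uniform convergence, where $\mathcal P(\mathbb R)$ is the space of probability measures on $\mathbb R$ with the topology of weak convergence (Lévy–Prokhorov metric). A sequence in $\mathcal M(T)$ is tight if it has a subsequence converging in distribution (for deterministic elements: a convergent subsequence). *)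

theory Defs
  imports "HOL-Probability.Probability"
begin

definition prob_measures_R :: "real measure set" where
  "prob_measures_R = {M. sets M = sets borel \<and> prob_space M}"

definition eps_nbhd :: "real \<Rightarrow> real set \<Rightarrow> real set" where
  "eps_nbhd e A = {y. \<exists>x\<in>A. dist y x < e}"

definition lp_dist :: "real measure \<Rightarrow> real measure \<Rightarrow> real" where
  "lp_dist M N = Inf {e. e > 0 \<and> (\<forall>A\<in>sets borel.
       measure M A \<le> measure N (eps_nbhd e A) + e \<and>
       measure N A \<le> measure M (eps_nbhd e A) + e)}"

text \<open>The space M(T) = C([0,T], P(R)) with the Levy--Prokhorov metric.\<close>
definition path_space :: "real \<Rightarrow> (real \<Rightarrow> real measure) set" where
  "path_space T = {\<alpha>. (\<forall>t\<in>{0..T}. \<alpha> t \<in> prob_measures_R) \<and>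
     (\<forall>t\<in>{0..T}. \<forall>e>0. \<exists>d>0. \<forall>s\<in>{0..T}. \<bar>s - t\<bar> < d \<longrightarrow> lp_dist (\<alpha> s) (\<alpha> t) < e)}"

text \<open>A deterministic sequence in M(T) is tight iff it has a subsequence converging
  uniformly on [0,T] (in the Levy--Prokhorov metric) to an element of M(T).\<close>
definition tight_MT :: "real \<Rightarrow> (nat \<Rightarrow> real \<Rightarrow> real measure) \<Rightarrow> bool" where
  "tight_MT T \<beta> \<longleftrightarrow> (\<exists>r \<alpha>. strict_mono r \<and> \<alpha> \<in> path_space T \<and>
     (\<forall>e>0. \<forall>\<^sub>F n in sequentially. \<forall>t\<in>{0..T}. lp_dist (\<beta> (r n) t) (\<alpha> t) < e))"

definition weighted_dirac :: "nat set \<Rightarrow> (nat \<Rightarrow> real) \<Rightarrow> (nat \<Rightarrow> real) \<Rightarrow> real measure" where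
  "weighted_dirac I w x = measure_of UNIV (sets borel)
     (\<lambda>A. \<Sum>k\<in>I. ennreal (w k) * indicator A (x k))"

definition x0 :: "nat \<Rightarrow> nat \<Rightarrow> real" where
  "x0 N k = (if k = N then 2 else real k / real N)"

definition lam :: "nat \<Rightarrow> nat \<Rightarrow> real" where
  "lam N k = (if k = N then 1/2 else 1 / (2 * (real N - 1)))"

end

theory Submission
  imports Defs
begin

text \<open>The coefficients 2 (lambda_k + lambda_j) are symmetric, so the sum of the positions is
  conserved, and by continuity the heavy particle stays to the right of all light ones. The gap
  sum u = sum_j (V_N - V_j) satisfies u' = N V_N' >= N (N - 1)^2 / u by AM--HM, hence
  u(t)^2 >= 2 N (N - 1)^2 t, and since u <= N V_N this gives V_N(t) >= sqrt (N t / 2).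
  So at time T an atom of mass 1/2 escapes to infinity, which keeps alpha_{N,T} at
  Levy--Prokhorov distance at least 1/4 from any fixed probability measure for all large N.\<close>

lemma has_real_derivative_nonneg_imp_le:
  fixes f f' :: "real \<Rightarrow> real"
  assumes deriv: "\<And>t. t \<ge> 0 \<Longrightarrow> (f has_real_derivative f' t) (at t within {0..})"
    and nonneg: "\<And>t. t \<ge> 0 \<Longrightarrow> f' t \<ge> 0" and "T \<ge> 0"
  shows "f 0 \<le> f T"
proof (rule DERIV_nonneg_imp_increasing_open[OF \<open>T \<ge> 0\<close>])
  fix x :: real assume x: "0 < x" "x < T"
  have "(f has_real_derivative f' x) (at x within {0<..})"
    by (rule DERIV_subset[OF deriv]) (use x in auto)
  then have "DERIV f x :> f' x"
    using at_within_open[of x "{0<..}"] x by auto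
  then show "\<exists>y. DERIV f x :> y \<and> 0 \<le> y"
    using nonneg[of x] x by auto
next
  show "continuous_on {0..T} f"
    unfolding continuous_on_eq_continuous_within
  proof
    fix x assume "x \<in> {0..T}"
    then have "continuous (at x within {0..}) f"
      using DERIV_continuous[OF deriv[of x]] by auto
    then show "continuous (at x within {0..T}) f"
      by (rule continuous_within_subset) auto
  qed
qed

lemma card_sq_le_sum_mult_sum_inverse:
  fixes d :: "'a \<Rightarrow> real"
  assumes "finite J" "\<And>j. j \<in> J \<Longrightarrow> d j > 0"
  shows "real (card J) ^ 2 \<le> (\<Sum>j\<in>J. d j) * (\<Sum>j\<in>J. 1 / d j)"
proof -
  have pair: "2 \<le> d j / d k + d k / d j" if "j \<in> J" "k \<in> J" for j k
  proof -
    have p: "d j > 0" "d k > 0" using assms that by auto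
    have "d j / d k + d k / d j - 2 = (d j - d k)^2 / (d j * d k)"
      using p by (simp add: field_simps power2_eq_square)
    also have "\<dots> \<ge> 0" using p by simp
    finally show ?thesis by linarith
  qed
  have "(\<Sum>j\<in>J. d j) * (\<Sum>j\<in>J. 1 / d j) = (\<Sum>k\<in>J. \<Sum>j\<in>J. d j / d k)"
    unfolding sum_distrib_right sum_distrib_left by simp
  also have "\<dots> = (\<Sum>k\<in>J. \<Sum>j\<in>J. d j / d k + d k / d j) / 2"
    using sum.swap[of "\<lambda>k j. d j / d k" J J] by (simp add: sum.distrib)
  also have "\<dots> \<ge> (\<Sum>k\<in>J. \<Sum>j\<in>J. 2) / 2"
    by (intro divide_right_mono sum_mono pair) auto
  finally show ?thesis
    by (simp add: power2_eq_square)
qed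

lemma sum_antisymmetric_quotients_eq_0:
  fixes v :: "'a \<Rightarrow> real" and c :: "'a \<Rightarrow> 'a \<Rightarrow> real"
  assumes "finite I" and sym: "\<And>k j. c k j = c j k"
  shows "(\<Sum>k\<in>I. \<Sum>j\<in>I - {k}. c k j / (v k - v j)) = 0"
proof -
  let ?S = "\<Sum>k\<in>I. \<Sum>j\<in>I. c k j / (v k - v j)"
  have "(\<Sum>k\<in>I. \<Sum>j\<in>I - {k}. c k j / (v k - v j)) = ?S"
    using assms(1) by (intro sum.cong[OF refl]) (simp add: sum_diff1)
  moreover have "?S = (\<Sum>j\<in>I. \<Sum>k\<in>I. c k j / (v k - v j))"
    by (rule sum.swap)
  moreover have "\<dots> = - ?S"
    by (simp add: sum_negf[symmetric] sym, intro sum.cong refl,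
        metis minus_diff_eq minus_divide_right)
  ultimately show ?thesis by linarith
qed

locale heavy_particle_system =
  fixes N :: nat and v :: "nat \<Rightarrow> real \<Rightarrow> real"
  assumes N_ge_2: "N \<ge> 2"
    and distinct: "\<And>k j t. k \<in> {1..N} \<Longrightarrow> j \<in> {1..N} \<Longrightarrow> j \<noteq> k \<Longrightarrow> t \<ge> 0 \<Longrightarrow>
                     v k t \<noteq> v j t"
    and ode: "\<And>k t. k \<in> {1..N} \<Longrightarrow> t \<ge> 0 \<Longrightarrow>
               (v k has_real_derivative
                  (\<Sum>j\<in>{1..N} - {k}. 2 * (lam N k + lam N j) / (v k t - v j t)))
                 (at t within {0..})"
    and init: "\<And>k. k \<in> {1..N} \<Longrightarrow> v k 0 = x0 N k"
begin

definition drift :: "nat \<Rightarrow> real \<Rightarrow> real" where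
  "drift k t = (\<Sum>j\<in>{1..N} - {k}. 2 * (lam N k + lam N j) / (v k t - v j t))"

definition gap_sum :: "real \<Rightarrow> real" where
  "gap_sum t = (\<Sum>j\<in>{1..N-1}. v N t - v j t)"

lemma has_real_derivative_drift:
  "k \<in> {1..N} \<Longrightarrow> t \<ge> 0 \<Longrightarrow> (v k has_real_derivative drift k t) (at t within {0..})"
  unfolding drift_def by (rule ode)

lemma heavy_index: "N \<in> {1..N}" and light_indices: "{1..N} - {N} = {1..N-1}"
  using N_ge_2 by auto

lemma sum_split_heavy: "(\<Sum>k\<in>{1..N}. f k) = f N + (\<Sum>k\<in>{1..N-1}. f k)"
  using sum.remove[OF _ heavy_index, of f] unfolding light_indices by simp

lemma continuous_on_position: "k \<in> {1..N} \<Longrightarrow> continuous_on {0..} (v k)"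
  unfolding continuous_on_eq_continuous_within
  using DERIV_continuous[OF has_real_derivative_drift] by auto

lemma light_below_heavy:
  assumes j: "j \<in> {1..N-1}" and t: "t \<ge> 0"
  shows "v j t < v N t"
proof (rule ccontr)
  assume "\<not> v j t < v N t"
  then have "v N t - v j t \<le> 0" by simp
  have j': "j \<in> {1..N}" "j \<noteq> N" using j by auto
  have "continuous_on {0..t} (\<lambda>s. v N s - v j s)"
    by (intro continuous_on_diff continuous_on_subset[OF continuous_on_position]
        heavy_index j'(1)) auto
  moreover have "v j 0 < v N 0"
  proof -
    have "j < N" using j N_ge_2 by auto
    then have "real j / real N < 1" by simp
    then show ?thesis using init[OF heavy_index] init[OF j'(1)] j'(2) by (simp add: x0_def)
  qed
  ultimately obtain s where "0 \<le> s" "s \<le> t" "v N s - v j s = 0"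
    using IVT2'[of "\<lambda>s. v N s - v j s" t 0 0] \<open>v N t - v j t \<le> 0\<close> t by auto
  then show False
    using distinct[OF heavy_index j'(1)] j'(2) by auto
qed

lemma sum_drift_eq_0: "(\<Sum>k\<in>{1..N}. drift k t) = 0"
  unfolding drift_def
  by (rule sum_antisymmetric_quotients_eq_0) (auto simp: add.commute)

lemma sum_positions_const:
  assumes "t \<ge> 0"
  shows "(\<Sum>k\<in>{1..N}. v k t) = (\<Sum>k\<in>{1..N}. x0 N k)"
proof -
  have "((\<lambda>s. \<Sum>k\<in>{1..N}. v k s) has_real_derivative 0) (at s within {0..})" if "s \<ge> 0" for s
  proof -
    have "((\<lambda>s. \<Sum>k\<in>{1..N}. v k s) has_real_derivative (\<Sum>k\<in>{1..N}. drift k s)) (at s within {0..})"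
      by (rule DERIV_sum) (use has_real_derivative_drift that in auto)
    then show ?thesis unfolding sum_drift_eq_0 .
  qed
  then obtain c where "\<forall>s\<in>{0..}. (\<Sum>k\<in>{1..N}. v k s) = c"
    using has_field_derivative_zero_constant[of "{0..}" "\<lambda>s. \<Sum>k\<in>{1..N}. v k s"] by auto
  then have "(\<Sum>k\<in>{1..N}. v k t) = (\<Sum>k\<in>{1..N}. v k 0)"
    using assms by simp
  also have "\<dots> = (\<Sum>k\<in>{1..N}. x0 N k)"
    by (rule sum.cong) (simp_all add: init)
  finally show ?thesis .
qed

lemma gap_sum_pos:
  assumes "t \<ge> 0"
  shows "gap_sum t > 0"
proof -
  have one: "1 \<in> {1..N-1}" using N_ge_2 by simp
  show ?thesis
    unfolding gap_sum_def
    by (intro sum_pos2[OF _ one])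
       (use light_below_heavy[OF _ assms] one in \<open>auto intro: less_imp_le\<close>)
qed

lemma has_real_derivative_gap_sum:
  assumes "t \<ge> 0"
  shows "(gap_sum has_real_derivative real N * drift N t) (at t within {0..})"
proof -
  have "(gap_sum has_real_derivative (\<Sum>j\<in>{1..N-1}. drift N t - drift j t)) (at t within {0..})"
    unfolding gap_sum_def[abs_def]
    by (rule DERIV_sum) (use has_real_derivative_drift heavy_index assms in
        \<open>auto intro!: derivative_eq_intros\<close>)
  moreover have "(\<Sum>j\<in>{1..N-1}. drift N t - drift j t) = real N * drift N t"
    using sum_drift_eq_0[of t] sum_split_heavy[of "\<lambda>k. drift k t"] N_ge_2
    by (simp add: sum_subtractf of_nat_diff algebra_simps)
  ultimately show ?thesis by simp
qed

text \<open>As the heavy weight is 1/2, each light particle repels the heavy one with coefficient at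
  least 1, and AM--HM bounds the sum of these repulsions below by (N - 1)^2 / gap_sum t.\<close>
lemma gap_sum_mult_drift_ge:
  assumes "t \<ge> 0"
  shows "(real N - 1)^2 \<le> gap_sum t * drift N t"
proof -
  have gaps_pos: "v N t - v j t > 0" if "j \<in> {1..N-1}" for j
    using light_below_heavy[OF that assms] by simp
  have "(real N - 1)^2 \<le> gap_sum t * (\<Sum>j\<in>{1..N-1}. 1 / (v N t - v j t))"
    using card_sq_le_sum_mult_sum_inverse[of "{1..N-1}" "\<lambda>j. v N t - v j t"] gaps_pos N_ge_2
    by (simp add: gap_sum_def of_nat_diff)
  also have "\<dots> \<le> gap_sum t * drift N t"
  proof (intro mult_left_mono less_imp_le[OF gap_sum_pos[OF assms]])
    show "(\<Sum>j\<in>{1..N-1}. 1 / (v N t - v j t)) \<le> drift N t"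
      unfolding drift_def light_indices
    proof (rule sum_mono)
      fix j assume j: "j \<in> {1..N-1}"
      then have "1 \<le> 2 * (lam N N + lam N j)"
        using N_ge_2 by (simp add: lam_def)
      then show "1 / (v N t - v j t) \<le> 2 * (lam N N + lam N j) / (v N t - v j t)"
        using gaps_pos[OF j] by (simp add: divide_right_mono)
    qed
  qed
  finally show ?thesis .
qed

lemma gap_sum_sq_ge:
  assumes "t \<ge> 0"
  shows "2 * real N * (real N - 1)^2 * t \<le> gap_sum t ^ 2"
proof -
  let ?g = "\<lambda>s. gap_sum s ^ 2 - 2 * real N * (real N - 1)^2 * s"
  have "?g 0 \<le> ?g t"
  proof (rule has_real_derivative_nonneg_imp_le[OF _ _ assms])
    fix s :: real assume s: "s \<ge> 0"
    show "(?g has_real_derivative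
            2 * real N * (gap_sum s * drift N s - (real N - 1)^2)) (at s within {0..})"
      using has_real_derivative_gap_sum[OF s]
      by (auto intro!: derivative_eq_intros simp: algebra_simps)
    show "0 \<le> 2 * real N * (gap_sum s * drift N s - (real N - 1)^2)"
      using gap_sum_mult_drift_ge[OF s] by simp
  qed
  then show ?thesis
    using zero_le_power2[of "gap_sum 0"] by linarith
qed

lemma gap_sum_le: "t \<ge> 0 \<Longrightarrow> gap_sum t \<le> real N * v N t"
  using sum_positions_const[of t] sum_split_heavy[of "\<lambda>k. v k t"] N_ge_2
    sum_nonneg[of "{1..N}" "x0 N"]
  by (simp add: gap_sum_def sum_subtractf of_nat_diff x0_def algebra_simps)

theorem heavy_particle_escape:
  assumes "t \<ge> 0"
  shows "sqrt (real N * t / 2) \<le> v N t"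
proof -
  have N_pos: "real N > 0" using N_ge_2 by simp
  have "real N * v N t > 0"
    using gap_sum_pos[OF assms] gap_sum_le[OF assms] by linarith
  then have v_pos: "v N t > 0"
    using N_pos by (simp add: zero_less_mult_iff)
  have "real N ^ 2 \<le> (2 * (real N - 1))^2"
    using N_ge_2 by (intro power_mono) auto
  then have "real N ^ 2 * (real N * t / 2) \<le> (2 * (real N - 1))^2 * (real N * t / 2)"
    by (rule mult_right_mono) (use assms in simp)
  also have "\<dots> = 2 * real N * (real N - 1)^2 * t"
    by (simp add: power2_eq_square algebra_simps)
  also have "\<dots> \<le> gap_sum t ^ 2"
    by (rule gap_sum_sq_ge[OF assms])
  also have "\<dots> \<le> real N ^ 2 * v N t ^ 2"
    using gap_sum_pos[OF assms] gap_sum_le[OF assms]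
    by (simp add: power_mult_distrib[symmetric] power_mono)
  finally have "real N * t / 2 \<le> v N t ^ 2"
    using N_pos by simp
  then show ?thesis
    using v_pos by (simp add: real_le_lsqrt)
qed

end

lemma emeasure_weighted_dirac:
  assumes "finite I" "A \<in> sets borel"
  shows "emeasure (weighted_dirac I w x) A = (\<Sum>k\<in>I. ennreal (w k) * indicator A (x k))"
  unfolding weighted_dirac_def
proof (rule emeasure_measure_of_sigma)
  show "sigma_algebra UNIV (sets (borel :: real measure))"
    using sets.sigma_algebra_axioms[of borel] by simp
  show "positive (sets borel) (\<lambda>A. \<Sum>k\<in>I. ennreal (w k) * indicator A (x k))"
    by (simp add: positive_def)
  show "countably_additive (sets borel) (\<lambda>A. \<Sum>k\<in>I. ennreal (w k) * indicator A (x k))"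
    unfolding countably_additive_def
    by (intro allI impI, subst suminf_sum) (auto simp: suminf_indicator)
qed (use assms in auto)

lemma finite_measure_weighted_dirac:
  assumes "finite I"
  shows "finite_measure (weighted_dirac I w x)"
proof
  have "space (weighted_dirac I w x) = UNIV"
    by (simp add: weighted_dirac_def)
  then show "emeasure (weighted_dirac I w x) (space (weighted_dirac I w x)) \<noteq> \<infinity>"
    using assms by (simp add: emeasure_weighted_dirac ennreal_mult_eq_top_iff)
qed

lemma measure_weighted_dirac:
  assumes "finite I" "A \<in> sets borel" "\<And>k. k \<in> I \<Longrightarrow> w k \<ge> 0"
  shows "measure (weighted_dirac I w x) A = (\<Sum>k\<in>I. w k * indicator A (x k))"
proof -
  have "(\<Sum>k\<in>I. ennreal (w k) * indicator A (x k)) = (\<Sum>k\<in>I. ennreal (w k * indicator A (x k)))"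
    using assms(3) by (intro sum.cong refl) (simp add: ennreal_mult' indicator_def)
  also have "\<dots> = ennreal (\<Sum>k\<in>I. w k * indicator A (x k))"
    using assms(3) by (intro sum_ennreal) auto
  finally show ?thesis
    unfolding measure_def using emeasure_weighted_dirac[OF assms(1,2)] assms(3)
    by (simp add: sum_nonneg)
qed

lemma measure_weighted_dirac_ge:
  assumes "finite I" "A \<in> sets borel" "\<And>k. k \<in> I \<Longrightarrow> w k \<ge> 0" "k \<in> I" "x k \<in> A"
  shows "w k \<le> measure (weighted_dirac I w x) A"
proof -
  have "w k * indicator A (x k) \<le> (\<Sum>j\<in>I. w j * indicator A (x j))"
    by (rule member_le_sum) (use assms in auto)
  then show ?thesis
    using measure_weighted_dirac[OF assms(1-3)] assms(5) by simp
qed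

lemma prob_measures_R_tail_lt:
  assumes "P \<in> prob_measures_R" "e > 0"
  obtains n :: nat where "measure P {real n<..} < e"
proof -
  interpret prob_space P using assms(1) by (simp add: prob_measures_R_def)
  have sets_P: "sets P = sets borel" using assms(1) by (simp add: prob_measures_R_def)
  have "(\<lambda>n. measure P {real n<..}) \<longlonglongrightarrow> measure P (\<Inter>n. {real n<..})"
    by (rule finite_Lim_measure_decseq) (auto simp: sets_P decseq_def)
  moreover have "(\<Inter>n. {real n<..}) = {}"
    by (auto simp: not_less) (meson le_less_trans less_irrefl real_arch_simple)
  ultimately have "\<forall>\<^sub>F n in sequentially. measure P {real n<..} < e"
    using assms(2) by (auto dest: order_tendstoD)
  then show ?thesis
    using that eventually_sequentially by auto
qed

lemma lp_dist_ge_atom_beyond_tail: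
  assumes "finite_measure M" "finite_measure P" "sets P = sets borel"
    and far: "a + d \<le> y" and atom: "measure P {a<..} + d \<le> measure M {y}"
  shows "d \<le> lp_dist M P"
proof (rule ccontr)
  define S where "S = {e. e > 0 \<and> (\<forall>A\<in>sets borel.
       measure M A \<le> measure P (eps_nbhd e A) + e \<and> measure P A \<le> measure M (eps_nbhd e A) + e)}"
  assume "\<not> d \<le> lp_dist M P"
  then have "Inf S < d"
    by (simp add: lp_dist_def S_def)
  moreover have "measure M (space M) + measure P (space P) + 1 \<in> S" (is "?c \<in> S")
    unfolding S_def
  proof (intro CollectI conjI ballI)
    show "?c > 0"
      using measure_nonneg[of M "space M"] measure_nonneg[of P "space P"] by linarith
    fix A :: "real set"
    show "measure M A \<le> measure P (eps_nbhd ?c A) + ?c"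
      using finite_measure.bounded_measure[OF assms(1), of A] measure_nonneg[of P "space P"]
        measure_nonneg[of P "eps_nbhd ?c A"] by linarith
    show "measure P A \<le> measure M (eps_nbhd ?c A) + ?c"
      using finite_measure.bounded_measure[OF assms(2), of A] measure_nonneg[of M "space M"]
        measure_nonneg[of M "eps_nbhd ?c A"] by linarith
  qed
  ultimately obtain e where "e \<in> S" "e < d"
    using cInf_lessD by blast
  then have "measure M {y} \<le> measure P (eps_nbhd e {y}) + e"
    by (simp add: S_def)
  also have "\<dots> \<le> measure P {a<..} + e"
    using far \<open>e < d\<close> assms(3)
    by (intro add_right_mono finite_measure.finite_measure_mono[OF assms(2)])
       (auto simp: eps_nbhd_def dist_real_def)
  finally show False
    using atom \<open>e < d\<close> by linarith
qed

lemma tight_MT_imp_frequently_close: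
  assumes "tight_MT T \<beta>" "T \<ge> 0"
  obtains P where "P \<in> prob_measures_R" "\<And>e m. e > 0 \<Longrightarrow> \<exists>N\<ge>m. lp_dist (\<beta> N T) P < e"
proof -
  obtain r \<alpha> where r: "strict_mono r" and \<alpha>: "\<alpha> \<in> path_space T"
    and conv: "\<And>e. e > 0 \<Longrightarrow> \<forall>\<^sub>F n in sequentially. \<forall>t\<in>{0..T}. lp_dist (\<beta> (r n) t) (\<alpha> t) < e"
    using assms(1) unfolding tight_MT_def by blast
  have "\<exists>N\<ge>m. lp_dist (\<beta> N T) (\<alpha> T) < e" if "e > 0" for e m
  proof -
    have "\<forall>\<^sub>F n in sequentially. lp_dist (\<beta> (r n) T) (\<alpha> T) < e"
      using conv[OF that] by (rule eventually_mono) (use assms(2) in auto)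
    then obtain n0 where "\<And>n. n \<ge> n0 \<Longrightarrow> lp_dist (\<beta> (r n) T) (\<alpha> T) < e"
      unfolding eventually_sequentially by blast
    then show ?thesis
      using seq_suble[OF r, of "max m n0"] by (intro exI[of _ "r (max m n0)"]) auto
  qed
  moreover have "\<alpha> T \<in> prob_measures_R"
    using \<alpha> assms(2) by (simp add: path_space_def)
  ultimately show ?thesis
    using that by blast
qed

theorem mainTheorem4:
  fixes V :: "nat \<Rightarrow> nat \<Rightarrow> real \<Rightarrow> real" and T :: real
  assumes T_pos: "T > 0"
    and distinct: "\<And>N k j t. N \<ge> 2 \<Longrightarrow> k \<in> {1..N} \<Longrightarrow> j \<in> {1..N} \<Longrightarrow> j \<noteq> k \<Longrightarrow>
                      t \<ge> 0 \<Longrightarrow> V N k t \<noteq> V N j t"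
    and ode: "\<And>N k t. N \<ge> 2 \<Longrightarrow> k \<in> {1..N} \<Longrightarrow> t \<ge> 0 \<Longrightarrow>
               (V N k has_real_derivative
                  (\<Sum>j\<in>{1..N} - {k}. 2 * (lam N k + lam N j) / (V N k t - V N j t)))
                 (at t within {0..})"
    and init: "\<And>N k. N \<ge> 2 \<Longrightarrow> k \<in> {1..N} \<Longrightarrow> V N k 0 = x0 N k"
  shows "\<not> tight_MT T (\<lambda>N t. weighted_dirac {1..N} (lam N) (\<lambda>k. V N k t))"
proof
  let ?\<alpha> = "\<lambda>N t. weighted_dirac {1..N} (lam N) (\<lambda>k. V N k t)"
  assume "tight_MT T ?\<alpha>"
  then obtain P where P: "P \<in> prob_measures_R"
    and close: "\<And>e m. e > 0 \<Longrightarrow> \<exists>N\<ge>m. lp_dist (?\<alpha> N T) P < e"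
    by (rule tight_MT_imp_frequently_close) (use T_pos in auto)
  obtain a :: nat where tail: "measure P {real a<..} < 1/4"
    using prob_measures_R_tail_lt[OF P, of "1/4"] by auto
  obtain m :: nat where m: "2 * (real a + 1)^2 / T < real m"
    using reals_Archimedean2 by blast
  obtain N where N: "N \<ge> max 2 m" and close_N: "lp_dist (?\<alpha> N T) P < 1/4"
    using close[of "1/4" "max 2 m"] by auto
  have N_ge_2: "N \<ge> 2" using N by simp
  interpret heavy_particle_system N "V N"
    by unfold_locales
      (fact N_ge_2 | (rule distinct[OF N_ge_2] ode[OF N_ge_2] init[OF N_ge_2]; assumption))+
  have "2 * (real a + 1)^2 < real m * T"
    using m T_pos by (simp add: pos_divide_less_eq)
  also have "\<dots> \<le> real N * T"
    using N T_pos by (intro mult_right_mono) auto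
  finally have "(real a + 1)^2 < real N * T / 2"
    by simp
  then have "real a + 1 < sqrt (real N * T / 2)"
    by (rule real_less_rsqrt)
  also have "\<dots> \<le> V N N T"
    by (rule heavy_particle_escape) (use T_pos in simp)
  finally have far: "real a + 1 < V N N T" .
  have atom: "1/2 \<le> measure (?\<alpha> N T) {V N N T}"
    using measure_weighted_dirac_ge[of "{1..N}" "{V N N T}" "lam N" N] N_ge_2
    by (simp add: lam_def)
  have "1/4 \<le> lp_dist (?\<alpha> N T) P"
  proof (rule lp_dist_ge_atom_beyond_tail[where a = "real a"])
    show "finite_measure (?\<alpha> N T)"
      by (rule finite_measure_weighted_dirac) simp
    show "finite_measure P" "sets P = sets borel"
      using P by (simp_all add: prob_measures_R_def prob_space.finite_measure)
    show "real a + 1/4 \<le> V N N T"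
      using far by simp
    show "measure P {real a<..} + 1/4 \<le> measure (?\<alpha> N T) {V N N T}"
      using tail atom by simp
  qed
  with close_N show False by simp
qed

end
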